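(* Let $\mathcal{F}=(M,\{A^u\}_{u\in Q})$ be an FDFA and let $\mathcal{D}_1$ be the automaton constructed from it as in the context. Then $L(\mathcal{D}_1)=\{u\$v\mid u\in\Sigma^*,\ v\in\Sigma^*,\ M(uv)=M(u),\ v\in L(A^{M(u)})\}$.
   Context: $\Sigma$ is a finite alphabet and $\$\notin\Sigma$. For a complete DFA $A$ and finite word $w$, $A(w)$ is the state reached from the initial state on $w$. An FDFA is $\mathcal{F}=(M,\{A^q\}_{q\in Q})$ with $M=(\Sigma,Q,q_0,\delta)$ a complete DFA without accepting states and each $A^q=(\Sigma,Q^q,s^q,F^q,\delta^q)$ a complete DFA. For a state $u\in Q$, $M^u_u$ is $M$ with initial state $u$ and accepting set $\{u\}$, and $N_u=M^u_u\times A^u$ is the synchronous product DFA (accepting exactly the words accepted by both), written $N_u=(\Sigma,Q_u,s_u,F_u,\delta_u)$. Then $\mathcal{D}_1=(\Sigma\cup\{\$\},\ Q\cup\bigcup_{u\in Q}Q_u,\ q_0,\ \bigcup_{u\in Q}F_u,\ \delta\cup\bigcup_{u\in Q}\delta_u\cup\{(u,\$,s_u)\mid u\in Q\})$, where the sets $Q_u$ are disjoint copies. *)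

theory Defs
  imports Main
begin

record ('q, 'a) dfa =
  states :: "'q set"
  init   :: 'q
  final  :: "'q set"
  trans  :: "'q \<Rightarrow> 'a \<Rightarrow> 'q"

definition complete_dfa :: "('q, 'a) dfa \<Rightarrow> bool" where
  "complete_dfa A \<longleftrightarrow> finite (states A) \<and> init A \<in> states A \<and> final A \<subseteq> states A
     \<and> (\<forall>q \<in> states A. \<forall>a. trans A q a \<in> states A)"

primrec run :: "('q, 'a) dfa \<Rightarrow> 'q \<Rightarrow> 'a list \<Rightarrow> 'q" where
  "run A q [] = q"
| "run A q (a # w) = run A (trans A q a) w"

definition reach :: "('q, 'a) dfa \<Rightarrow> 'a list \<Rightarrow> 'q" where
  "reach A w = run A (init A) w"

definition lang :: "('q, 'a) dfa \<Rightarrow> 'a list set" where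
  "lang A = {w. reach A w \<in> final A}"

definition prod_dfa :: "('p, 'a) dfa \<Rightarrow> ('q, 'a) dfa \<Rightarrow> ('p \<times> 'q, 'a) dfa" where
  "prod_dfa A B = \<lparr> states = states A \<times> states B, init = (init A, init B),
     final = final A \<times> final B, trans = (\<lambda>(p, q) a. (trans A p a, trans B q a)) \<rparr>"

definition Muu :: "('q, 'a) dfa \<Rightarrow> 'q \<Rightarrow> ('q, 'a) dfa" where
  "Muu M u = M\<lparr> init := u, final := {u} \<rparr>"

definition fdfa :: "('q, 'a::finite) dfa \<Rightarrow> ('q \<Rightarrow> ('s, 'a) dfa) \<Rightarrow> bool" where
  "fdfa M A \<longleftrightarrow> complete_dfa M \<and> final M = {} \<and> (\<forall>u \<in> states M. complete_dfa (A u))"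

datatype 'a sym = Sym 'a | Dollar

record ('q, 'a) pdfa =
  pstates :: "'q set"
  pinit   :: 'q
  pfinal  :: "'q set"
  ptrans  :: "'q \<Rightarrow> 'a \<Rightarrow> 'q option"

primrec prun :: "('q, 'a) pdfa \<Rightarrow> 'q \<Rightarrow> 'a list \<Rightarrow> 'q option" where
  "prun D q [] = Some q"
| "prun D q (a # w) = (case ptrans D q a of None \<Rightarrow> None | Some q' \<Rightarrow> prun D q' w)"

definition plang :: "('q, 'a) pdfa \<Rightarrow> 'a list set" where
  "plang D = {w. \<exists>q. prun D (pinit D) w = Some q \<and> q \<in> pfinal D}"

text \<open>The automaton D1. States of M are tagged Inl; the copy Q_u of the states of
  N_u = M^u_u \<times> A^u is tagged Inr (u, -), making the copies disjoint.\<close>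
definition D1 :: "('q, 'a) dfa \<Rightarrow> ('q \<Rightarrow> ('s, 'a) dfa)
                   \<Rightarrow> ('q + ('q \<times> ('q \<times> 's)), 'a sym) pdfa" where
  "D1 M A = \<lparr>
     pstates = Inl ` states M \<union> (\<Union>u \<in> states M. (\<lambda>x. Inr (u, x)) ` states (prod_dfa (Muu M u) (A u))),
     pinit = Inl (init M),
     pfinal = (\<Union>u \<in> states M. (\<lambda>x. Inr (u, x)) ` final (prod_dfa (Muu M u) (A u))),
     ptrans = (\<lambda>st c. case (st, c) of
         (Inl q, Sym a) \<Rightarrow> (if q \<in> states M then Some (Inl (trans M q a)) else None)
       | (Inl u, Dollar) \<Rightarrow> (if u \<in> states M then Some (Inr (u, init (prod_dfa (Muu M u) (A u)))) else None)
       | (Inr (u, x), Sym a) \<Rightarrow>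
           (if u \<in> states M \<and> x \<in> states (prod_dfa (Muu M u) (A u))
            then Some (Inr (u, trans (prod_dfa (Muu M u) (A u)) x a)) else None)
       | (Inr _, Dollar) \<Rightarrow> None) \<rparr>"

end

theory Submission
  imports Defs
begin

text \<open>Reading a word u\$v, the automaton D1 first follows M on u, ending in M(u); the symbol \$
  then jumps to the initial state of N_{M(u)}, which reads v and rejects any further \$.
  Hence D1 accepts u\$v iff v is accepted by N_{M(u)} = M^{M(u)}_{M(u)} \<times> A^{M(u)}, i.e. iff
  M returns from M(u) to M(u) on v and A^{M(u)} accepts v; the first condition says
  M(uv) = M(u).\<close>

lemma run_append: "run A q (u @ v) = run A (run A q u) v"
  by (induction u arbitrary: q) auto

lemma reach_append: "reach A (u @ v) = run A (reach A u) v"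
  by (simp add: reach_def run_append)

lemma run_in_states: "complete_dfa A \<Longrightarrow> q \<in> states A \<Longrightarrow> run A q w \<in> states A"
  by (induction w arbitrary: q) (auto simp: complete_dfa_def)

lemma reach_in_states: "complete_dfa A \<Longrightarrow> reach A w \<in> states A"
  by (simp add: reach_def run_in_states complete_dfa_def)

lemma prod_dfa_simps [simp]:
  "init (prod_dfa A B) = (init A, init B)"
  "final (prod_dfa A B) = final A \<times> final B"
  by (simp_all add: prod_dfa_def)

lemma Muu_simps [simp]: "init (Muu M u) = u" "final (Muu M u) = {u}"
  by (simp_all add: Muu_def)

lemma run_prod_dfa: "run (prod_dfa A B) (p, q) w = (run A p w, run B q w)"
  by (induction w arbitrary: p q) (auto simp: prod_dfa_def)

lemma run_Muu: "run (Muu M u) q w = run M q w"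
  by (induction w arbitrary: q) (auto simp: Muu_def)

lemma lang_prod_dfa: "lang (prod_dfa A B) = lang A \<inter> lang B"
  by (auto simp: lang_def reach_def run_prod_dfa)

lemma lang_Muu: "lang (Muu M u) = {w. run M u w = u}"
  by (simp add: lang_def reach_def run_Muu)

lemma complete_dfa_prod_dfa:
  "complete_dfa A \<Longrightarrow> complete_dfa B \<Longrightarrow> complete_dfa (prod_dfa A B)"
  unfolding complete_dfa_def prod_dfa_def by auto

lemma complete_dfa_Muu: "complete_dfa M \<Longrightarrow> u \<in> states M \<Longrightarrow> complete_dfa (Muu M u)"
  unfolding complete_dfa_def Muu_def by auto

lemma prun_append:
  "prun D q (v @ w) = (case prun D q v of None \<Rightarrow> None | Some q' \<Rightarrow> prun D q' w)"
  by (induction v arbitrary: q) (auto split: option.split)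

lemma Dollar_free_eq_map_Sym:
  assumes "Dollar \<notin> set w"
  obtains u where "w = map Sym u"
proof -
  have "c \<in> range Sym" if "c \<in> set w" for c
    by (cases c) (use that assms in auto)
  with that show thesis
    using ex_map_conv[of w Sym] by blast
qed

lemma split_first_Dollar:
  assumes "Dollar \<in> set w"
  obtains u w' where "w = map Sym u @ Dollar # w'"
proof -
  obtain ys w' where "w = ys @ Dollar # w'" "Dollar \<notin> set ys"
    using split_list_first[OF assms] by blast
  with that show thesis by (metis Dollar_free_eq_map_Sym)
qed

lemma D1_simps [simp]:
  "pinit (D1 M A) = Inl (init M)"
  "ptrans (D1 M A) (Inl q) (Sym a) = (if q \<in> states M then Some (Inl (trans M q a)) else None)"
  "ptrans (D1 M A) (Inl q) Dollar =
    (if q \<in> states M then Some (Inr (q, init (prod_dfa (Muu M q) (A q)))) else None)"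
  "ptrans (D1 M A) (Inr (u, x)) (Sym a) =
    (if u \<in> states M \<and> x \<in> states (prod_dfa (Muu M u) (A u))
     then Some (Inr (u, trans (prod_dfa (Muu M u) (A u)) x a)) else None)"
  "ptrans (D1 M A) (Inr (u, x)) Dollar = None"
  "Inl q \<notin> pfinal (D1 M A)"
  "Inr (u, x) \<in> pfinal (D1 M A) \<longleftrightarrow> u \<in> states M \<and> x \<in> final (prod_dfa (Muu M u) (A u))"
  by (auto simp: D1_def simp del: prod_dfa_simps)

context
  fixes M :: "('q, 'a::finite) dfa" and A :: "'q \<Rightarrow> ('s, 'a) dfa"
  assumes fdfa: "fdfa M A"
begin

abbreviation N :: "'q \<Rightarrow> ('q \<times> 's, 'a) dfa" where
  "N u \<equiv> prod_dfa (Muu M u) (A u)"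

lemma complete_dfa_M: "complete_dfa M"
  using fdfa by (simp add: fdfa_def)

lemma complete_dfa_N: "u \<in> states M \<Longrightarrow> complete_dfa (N u)"
  using fdfa by (simp add: fdfa_def complete_dfa_prod_dfa complete_dfa_Muu)

lemma init_N_in_states: "u \<in> states M \<Longrightarrow> init (N u) \<in> states (N u)"
  using complete_dfa_N by (simp add: complete_dfa_def)

lemma prun_D1_Inl_map_Sym:
  "q \<in> states M \<Longrightarrow> prun (D1 M A) (Inl q) (map Sym w) = Some (Inl (run M q w))"
proof (induction w arbitrary: q)
  case (Cons a w)
  then have "trans M q a \<in> states M"
    using complete_dfa_M by (simp add: complete_dfa_def)
  with Cons show ?case by simp
qed simp

lemma prun_D1_Inr_map_Sym:
  "u \<in> states M \<Longrightarrow> x \<in> states (N u) \<Longrightarrow>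
    prun (D1 M A) (Inr (u, x)) (map Sym w) = Some (Inr (u, run (N u) x w))"
proof (induction w arbitrary: x)
  case (Cons a w)
  then have "trans (N u) x a \<in> states (N u)"
    using complete_dfa_N by (simp add: complete_dfa_def)
  with Cons show ?case by simp
qed simp

lemma prun_D1_Inr_Dollar:
  assumes "u \<in> states M" "x \<in> states (N u)" "Dollar \<in> set w"
  shows "prun (D1 M A) (Inr (u, x)) w = None"
proof -
  obtain v w' where "w = map Sym v @ Dollar # w'"
    using split_first_Dollar[OF assms(3)] .
  with assms(1,2) show ?thesis
    by (simp add: prun_append prun_D1_Inr_map_Sym)
qed

lemma prun_D1_map_Sym_Dollar:
  "prun (D1 M A) (Inl (init M)) (map Sym u @ Dollar # w)
    = prun (D1 M A) (Inr (reach M u, init (N (reach M u)))) w"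
proof -
  have "init M \<in> states M"
    using complete_dfa_M by (simp add: complete_dfa_def)
  with reach_in_states[OF complete_dfa_M, of u] show ?thesis
    by (simp add: prun_append prun_D1_Inl_map_Sym reach_def)
qed

lemma plang_D1:
  "plang (D1 M A) = {map Sym u @ [Dollar] @ map Sym v | u v. v \<in> lang (N (reach M u))}"
  (is "_ = ?L")
proof (intro equalityI subsetI)
  fix w assume "w \<in> plang (D1 M A)"
  then obtain s where run: "prun (D1 M A) (pinit (D1 M A)) w = Some s"
    and final: "s \<in> pfinal (D1 M A)"
    by (auto simp: plang_def)
  have "Dollar \<in> set w"
  proof (rule ccontr)
    assume "Dollar \<notin> set w"
    then obtain u where "w = map Sym u" by (rule Dollar_free_eq_map_Sym)
    moreover have "init M \<in> states M"
      using complete_dfa_M by (simp add: complete_dfa_def)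
    ultimately show False
      using run final by (auto simp: prun_D1_Inl_map_Sym)
  qed
  then obtain u w' where w: "w = map Sym u @ Dollar # w'"
    by (rule split_first_Dollar)
  define q where "q = reach M u"
  have q: "q \<in> states M"
    using reach_in_states[OF complete_dfa_M] by (simp add: q_def)
  have run': "prun (D1 M A) (Inr (q, init (N q))) w' = Some s"
    using run by (simp add: w q_def prun_D1_map_Sym_Dollar)
  then have "Dollar \<notin> set w'"
    using prun_D1_Inr_Dollar[OF q init_N_in_states[OF q]] by auto
  then obtain v where v: "w' = map Sym v" by (rule Dollar_free_eq_map_Sym)
  have "s = Inr (q, run (N q) (init (N q)) v)"
    using run' prun_D1_Inr_map_Sym[OF q init_N_in_states[OF q]] by (simp add: v)
  with final have "v \<in> lang (N q)"
    by (auto simp: lang_def reach_def)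
  with w v show "w \<in> ?L" by (auto simp: q_def)
next
  fix w assume "w \<in> ?L"
  then obtain u v where w: "w = map Sym u @ Dollar # map Sym v"
    and v: "v \<in> lang (N (reach M u))" by auto
  define q where "q = reach M u"
  have q: "q \<in> states M"
    using reach_in_states[OF complete_dfa_M] by (simp add: q_def)
  have "prun (D1 M A) (pinit (D1 M A)) w = Some (Inr (q, run (N q) (init (N q)) v))"
    using prun_D1_Inr_map_Sym[OF q init_N_in_states[OF q]]
    by (simp add: w prun_D1_map_Sym_Dollar flip: q_def)
  moreover have "Inr (q, run (N q) (init (N q)) v) \<in> pfinal (D1 M A)"
    using q v by (auto simp: lang_def reach_def q_def)
  ultimately show "w \<in> plang (D1 M A)" by (auto simp: plang_def)
qed

end

theorem proposition4:
  fixes M :: "('q, 'a::finite) dfa" and A :: "'q \<Rightarrow> ('s, 'a) dfa"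
  assumes "fdfa M A"
  shows "plang (D1 M A) =
    {map Sym u @ [Dollar] @ map Sym v | u v.
       reach M (u @ v) = reach M u \<and> v \<in> lang (A (reach M u))}"
  by (simp add: plang_D1[OF assms] lang_prod_dfa lang_Muu reach_append)

end
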